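(* Let $M=(\mathcal{X},\mathcal{A},T,r,H,\rho)$, $\pi_e$, $\pi_b$, $K\ge1$, and $(\widetilde M,\widetilde\pi_e,\widetilde\pi_b)$ be as in the Replicator construction below. Then: (a) $\max_{l}\max_{\tilde x\in\widetilde{\mathcal{X}}_l,a}\frac{d_l^{\widetilde\pi_e}(\tilde x,a;\widetilde M)}{d_l^{\widetilde\pi_b}(\tilde x,a;\widetilde M)}\le 2\max_h\max_{x\in\mathcal{X}_h,a}\frac{d_h^{\pi_e}(x,a;M)}{d_h^{\pi_b}(x,a;M)}$; (b) the state-action value function of $\widetilde\pi_e$ in $\widetilde M$ is given, for $h\le H-1$, $x\in\mathcal{X}_h$, $k\in[K]$, $a\in\mathcal{A}$, by $Q^{\widetilde\pi_e}((x,k),a;\widetilde M)=Q^{\pi_e}_h(x,a;M)$ if $k=K$; $=Q^{\pi_e}_h(x,\pi_e(x);M)$ if $k<K$ and $a=\pi_e(x)$; $=\sum_{x'\in\mathcal{X}_h}d_h^{\pi_b}(x';M)Q_h^{\pi_e}(x',\pi_e(x');M)$ if $k<K$ and $a\ne\pi_e(x)$; and $Q^{\widetilde\pi_e}((x,1),a;\widetilde M)=Q_H^{\pi_e}(x,a;M)$ for $x\in\mathcal{X}_H$. In particular $V^{\widetilde\pi_e}(\widetilde\rho;\widetilde M)=V^{\pi_e}(\rho;M)$.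
   Context: $M$ is a layered finite-horizon MDP with state space $\mathcal{X}_1\cup\dots\cup\mathcal{X}_H$, action set $\mathcal{A}$ with $|\mathcal{A}|\ge2$, transition $T$, mean reward $r$, initial distribution $\rho\in\Delta(\mathcal{X}_1)$; $\pi_e$ is a deterministic evaluation policy and $\pi_b$ an offline policy; $d_h^\pi(x;M)=\Pr(x_h=x)$ and $d_h^\pi(x,a;M)=d_h^\pi(x;M)\pi(a|x)$; ratios with $0/0$ are ignored. Replicator construction with integer $K\ge1$: fix a deterministic $\pi_{\mathrm{other}}$ with $\pi_{\mathrm{other}}(x)\ne\pi_e(x)$ for all $x$. $\widetilde M$ has horizon $\widetilde H=(H-1)K+1$; its layer $l=(h-1)K+k$ ($h\in[H-1]$, $k\in[K]$) is $\{(x,k):x\in\mathcal{X}_h\}$, and its last layer $\widetilde H$ is $\{(x,1):x\in\mathcal{X}_H\}$; initial distribution $\widetilde\rho((x,1))=\rho(x)$. Transitions: for $h\le H-1$, $k\le K-1$, $x,x'\in\mathcal{X}_h$: $\widetilde T((x',k+1)|(x,k),a)=\mathbb{I}\{x'=x\}$ if $a=\pi_e(x)$ and $=d_h^{\pi_b}(x';M)$ otherwise; for $k=K$, $x\in\mathcal{X}_h$, $x'\in\mathcal{X}_{h+1}$: $\widetilde T((x',1)|(x,K),a)=T(x'|x,a)$. Rewards: $\widetilde r((x,k),a)=0$ if $x\in\mathcal{X}_h$ with $h\le H-1$ and $k<K$; $\widetilde r((x,K),a)=r(x,a)$ for $x\in\mathcal{X}_h$, $h\le H-1$; $\widetilde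 r((x,1),a)=r(x,a)$ for $x\in\mathcal{X}_H$. Policies: $\widetilde\pi_e((x,k))=\pi_e(x)$; $\widetilde\pi_b((x,k))=\pi_b(\cdot|x)$ if $k=K$ and $\widetilde\pi_b((x,k))=\frac12\delta_{\pi_e(x)}+\frac12\delta_{\pi_{\mathrm{other}}(x)}$ otherwise. *)

theory Defs
  imports Complex_Main "HOL-Library.Extended_Real"
begin

text \<open>A layered finite-horizon MDP. Layers are indexed 1..hor; actions form a finite set.
  trans x a x' is the probability T(x'|x,a), rew x a the mean reward, init the initial
  distribution on layer 1.\<close>

record ('s,'a) mdp =
  layer :: "nat \<Rightarrow> 's set"
  acts  :: "'a set"
  trans :: "'s \<Rightarrow> 'a \<Rightarrow> 's \<Rightarrow> real"
  rew   :: "'s \<Rightarrow> 'a \<Rightarrow> real"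
  hor   :: nat
  init  :: "'s \<Rightarrow> real"

type_synonym ('s,'a) policy = "'s \<Rightarrow> 'a \<Rightarrow> real"

definition states :: "('s,'a) mdp \<Rightarrow> 's set" where
  "states M = (\<Union>h\<in>{1..hor M}. layer M h)"

definition wf_mdp :: "('s,'a) mdp \<Rightarrow> bool" where
  "wf_mdp M \<longleftrightarrow> hor M \<ge> 1 \<and> finite (acts M) \<and> acts M \<noteq> {}
    \<and> (\<forall>h\<in>{1..hor M}. finite (layer M h))
    \<and> (\<forall>h\<in>{1..hor M}. \<forall>h'\<in>{1..hor M}. h \<noteq> h' \<longrightarrow> layer M h \<inter> layer M h' = {})
    \<and> (\<forall>x\<in>layer M 1. init M x \<ge> 0) \<and> (\<Sum>x\<in>layer M 1. init M x) = 1
    \<and> (\<forall>h\<in>{1..<hor M}. \<forall>x\<in>layer M h. \<forall>a\<in>acts M.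
          (\<forall>x'\<in>layer M (Suc h). trans M x a x' \<ge> 0)
          \<and> (\<Sum>x'\<in>layer M (Suc h). trans M x a x') = 1)"

definition wf_policy :: "('s,'a) mdp \<Rightarrow> ('s,'a) policy \<Rightarrow> bool" where
  "wf_policy M \<pi> \<longleftrightarrow> (\<forall>x\<in>states M. (\<forall>a\<in>acts M. \<pi> x a \<ge> 0) \<and> (\<Sum>a\<in>acts M. \<pi> x a) = 1)"

definition det_policy :: "('s \<Rightarrow> 'a) \<Rightarrow> ('s,'a) policy" where
  "det_policy f x a = (if a = f x then 1 else 0)"

text \<open>State occupancy: occ0 M pi n x = Pr(x_{n+1} = x).\<close>
primrec occ0 :: "('s,'a) mdp \<Rightarrow> ('s,'a) policy \<Rightarrow> nat \<Rightarrow> 's \<Rightarrow> real" where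
  "occ0 M \<pi> 0 x = init M x"
| "occ0 M \<pi> (Suc n) x' =
     (\<Sum>x\<in>layer M (Suc n). \<Sum>a\<in>acts M. occ0 M \<pi> n x * \<pi> x a * trans M x a x')"

definition occ :: "('s,'a) mdp \<Rightarrow> ('s,'a) policy \<Rightarrow> nat \<Rightarrow> 's \<Rightarrow> real" where
  "occ M \<pi> h x = occ0 M \<pi> (h - 1) x"

definition occ_sa :: "('s,'a) mdp \<Rightarrow> ('s,'a) policy \<Rightarrow> nat \<Rightarrow> 's \<Rightarrow> 'a \<Rightarrow> real" where
  "occ_sa M \<pi> h x a = occ M \<pi> h x * \<pi> x a"

text \<open>Q-function with n steps to go (state in layer hor - n).\<close>
primrec Qrem :: "('s,'a) mdp \<Rightarrow> ('s,'a) policy \<Rightarrow> nat \<Rightarrow> 's \<Rightarrow> 'a \<Rightarrow> real" where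
  "Qrem M \<pi> 0 x a = rew M x a"
| "Qrem M \<pi> (Suc n) x a = rew M x a +
     (\<Sum>x'\<in>layer M (hor M - n). trans M x a x' * (\<Sum>a'\<in>acts M. \<pi> x' a' * Qrem M \<pi> n x' a'))"

definition Q :: "('s,'a) mdp \<Rightarrow> ('s,'a) policy \<Rightarrow> nat \<Rightarrow> 's \<Rightarrow> 'a \<Rightarrow> real" where
  "Q M \<pi> h x a = Qrem M \<pi> (hor M - h) x a"

definition Vval :: "('s,'a) mdp \<Rightarrow> ('s,'a) policy \<Rightarrow> real" where
  "Vval M \<pi> = (\<Sum>x\<in>layer M 1. init M x * (\<Sum>a\<in>acts M. \<pi> x a * Q M \<pi> 1 x a))"

text \<open>Ratio p/q with p/0 = infinity (for p > 0); 0/0 pairs are excluded in conc.\<close>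
definition ratio :: "real \<Rightarrow> real \<Rightarrow> ereal" where
  "ratio p q = (if q = 0 then \<infinity> else ereal (p / q))"

definition conc :: "('s,'a) mdp \<Rightarrow> ('s,'a) policy \<Rightarrow> ('s,'a) policy \<Rightarrow> ereal" where
  "conc M \<pi> \<pi>' = (SUP (h,x,a) \<in> {(h,x,a). h \<in> {1..hor M} \<and> x \<in> layer M h \<and> a \<in> acts M
        \<and> \<not> (occ_sa M \<pi> h x a = 0 \<and> occ_sa M \<pi>' h x a = 0)}.
      ratio (occ_sa M \<pi> h x a) (occ_sa M \<pi>' h x a))"

definition layer_of :: "('s,'a) mdp \<Rightarrow> 's \<Rightarrow> nat" where
  "layer_of M x = (THE h. h \<in> {1..hor M} \<and> x \<in> layer M h)"

definition rep_mdp :: "('s,'a) mdp \<Rightarrow> ('s \<Rightarrow> 'a) \<Rightarrow> ('s,'a) policy \<Rightarrow> nat \<Rightarrow> ('s \<times> nat, 'a) mdp" where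
  "rep_mdp M \<pi>e \<pi>b K = \<lparr>
     layer = (\<lambda>l. if 1 \<le> l \<and> l \<le> (hor M - 1) * K
                  then (\<lambda>x. (x, (l - 1) mod K + 1)) ` layer M ((l - 1) div K + 1)
                  else if l = (hor M - 1) * K + 1 then (\<lambda>x. (x, 1)) ` layer M (hor M)
                  else {}),
     acts = acts M,
     trans = (\<lambda>(x, k) a (x', k').
                if k < K then
                  (if k' = Suc k \<and> x' \<in> layer M (layer_of M x) then
                     (if a = \<pi>e x then (if x' = x then 1 else 0)
                      else occ M \<pi>b (layer_of M x) x')
                   else 0)
                else (if k' = 1 then trans M x a x' else 0)),
     rew = (\<lambda>(x, k) a. if k = K \<or> layer_of M x = hor M then rew M x a else 0),
     hor = (hor M - 1) * K + 1,
     init = (\<lambda>(x, k). if k = 1 then init M x else 0) \<rparr>"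

definition rep_pe :: "('s \<Rightarrow> 'a) \<Rightarrow> ('s \<times> nat \<Rightarrow> 'a)" where
  "rep_pe \<pi>e = (\<lambda>(x, k). \<pi>e x)"

definition rep_pb :: "nat \<Rightarrow> ('s \<Rightarrow> 'a) \<Rightarrow> ('s,'a) policy \<Rightarrow> ('s \<Rightarrow> 'a) \<Rightarrow> ('s \<times> nat, 'a) policy" where
  "rep_pb K \<pi>e \<pi>b \<pi>o = (\<lambda>(x, k) a. if k = K then \<pi>b x a
      else (if a = \<pi>e x then 1/2 else 0) + (if a = \<pi>o x then 1/2 else 0))"

end

theory Submission
  imports Defs
begin

text \<open>Inside the block of copies of layer \<open>h\<close>, playing \<open>\<pi>e\<close> keeps the state while any
  other action resamples it from \<open>occ M \<pi>b h\<close>.  So \<open>\<pi>e\<close> never moves inside a block, and the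
  behaviour policy, which plays \<open>\<pi>e\<close> and \<open>\<pi>o\<close> with probability 1/2 each there, keeps its
  state distribution at \<open>occ M \<pi>b h\<close>, the fixed point of this half-resampling.  Thus on every
  copy of layer \<open>h\<close> both policies have their state occupancies in \<open>M\<close>.  On the last copy the
  action probabilities are those of \<open>M\<close> too; on the others \<open>\<pi>e x\<close> has behaviour probability
  \<open>1/2 \<ge> \<pi>b x (\<pi>e x) / 2\<close>, which costs the factor 2.  Rewards are collected only on the last
  copy, so backward induction over the copies gives the \<open>Q\<close>-values and the values.\<close>

lemma occ_Suc:
  "1 \<le> l \<Longrightarrow> occ M \<pi> (Suc l) x' =
     (\<Sum>x\<in>layer M l. \<Sum>a\<in>acts M. occ M \<pi> l x * \<pi> x a * trans M x a x')"
  by (cases l) (simp_all add: occ_def)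

lemma Q_hor: "Q M \<pi> (hor M) x a = rew M x a"
  by (simp add: Q_def)

lemma Q_Suc:
  assumes "l < hor M"
  shows "Q M \<pi> l x a = rew M x a +
    (\<Sum>x'\<in>layer M (Suc l). trans M x a x' * (\<Sum>a'\<in>acts M. \<pi> x' a' * Q M \<pi> (Suc l) x' a'))"
proof -
  have "hor M - l = Suc (hor M - Suc l)" "hor M - (hor M - Suc l) = Suc l"
    using assms by auto
  then show ?thesis by (simp add: Q_def)
qed

lemma sum_det_policy:
  "finite A \<Longrightarrow> f x \<in> A \<Longrightarrow> (\<Sum>a\<in>A. det_policy f x a * g a) = g (f x)"
proof -
  have "(\<Sum>a\<in>A. det_policy f x a * g a) = (\<Sum>a\<in>A. if f x = a then g a else 0)"
    by (rule sum.cong) (auto simp: det_policy_def)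
  then show "finite A \<Longrightarrow> f x \<in> A \<Longrightarrow> ?thesis" by simp
qed

lemma det_policy_rep_pe [simp]: "det_policy (rep_pe \<pi>e) (x, k) = det_policy \<pi>e x"
  by (simp add: det_policy_def rep_pe_def fun_eq_iff)

lemma sum_image_Pair_left:
  "(\<Sum>s\<in>(\<lambda>x. (x, k)) ` A. f s) = (\<Sum>x\<in>A. f (x, k))"
  by (simp add: sum.reindex inj_on_def)

lemma ratio_nonneg: "0 \<le> p \<Longrightarrow> 0 \<le> q \<Longrightarrow> 0 \<le> ratio p q"
  by (simp add: ratio_def)

lemma ratio_half_le:
  fixes u w b :: real
  assumes "0 < u" "0 \<le> w" "0 \<le> b" "b \<le> 1"
  shows "ratio u (w / 2) \<le> 2 * ratio u (w * b)"
proof (cases "w * b = 0")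
  case True
  then show ?thesis by (simp add: ratio_def)
next
  case False
  then have "0 < w" "0 < b" using assms by (auto simp: less_le)
  then have "u / (w / 2) \<le> 2 * (u / (w * b))"
    using assms by (simp add: field_simps mult_left_le)
  with \<open>0 < w\<close> \<open>0 < b\<close> show ?thesis by (simp add: ratio_def)
qed

lemma ratio_le_conc:
  "h \<in> {1..hor M} \<Longrightarrow> x \<in> layer M h \<Longrightarrow> a \<in> acts M \<Longrightarrow>
   \<not> (occ_sa M \<pi> h x a = 0 \<and> occ_sa M \<pi>' h x a = 0) \<Longrightarrow>
   ratio (occ_sa M \<pi> h x a) (occ_sa M \<pi>' h x a) \<le> conc M \<pi> \<pi>'"
  unfolding conc_def by (rule SUP_upper2[where i = "(h, x, a)"]) auto

locale layered_mdp =
  fixes M :: "('s,'a) mdp"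
  assumes wf: "wf_mdp M"
begin

lemma hor_ge_1: "1 \<le> hor M"
  and finite_acts: "finite (acts M)"
  and finite_layer: "h \<in> {1..hor M} \<Longrightarrow> finite (layer M h)"
  and layers_disjoint: "h \<in> {1..hor M} \<Longrightarrow> h' \<in> {1..hor M} \<Longrightarrow> h \<noteq> h' \<Longrightarrow>
         layer M h \<inter> layer M h' = {}"
  and init_nonneg: "x \<in> layer M 1 \<Longrightarrow> 0 \<le> init M x"
  and sum_init: "(\<Sum>x\<in>layer M 1. init M x) = 1"
  and trans_nonneg: "h \<in> {1..<hor M} \<Longrightarrow> x \<in> layer M h \<Longrightarrow> a \<in> acts M \<Longrightarrow>
         x' \<in> layer M (Suc h) \<Longrightarrow> 0 \<le> trans M x a x'"
  and sum_trans: "h \<in> {1..<hor M} \<Longrightarrow> x \<in> layer M h \<Longrightarrow> a \<in> acts M \<Longrightarrow>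
         (\<Sum>x'\<in>layer M (Suc h). trans M x a x') = 1"
  using wf by (simp_all add: wf_mdp_def)

lemma layer_in_states: "h \<in> {1..hor M} \<Longrightarrow> x \<in> layer M h \<Longrightarrow> x \<in> states M"
  by (auto simp: states_def)

lemma layer_of_eq:
  assumes "h \<in> {1..hor M}" "x \<in> layer M h"
  shows "layer_of M x = h"
  unfolding layer_of_def
proof (rule the_equality)
  fix h' assume "h' \<in> {1..hor M} \<and> x \<in> layer M h'"
  with assms layers_disjoint[of h h'] show "h' = h" by blast
qed (use assms in simp)

lemma wf_policy_det: "(\<And>x. x \<in> states M \<Longrightarrow> f x \<in> acts M) \<Longrightarrow> wf_policy M (det_policy f)"
  using sum_det_policy[OF finite_acts, of f _ "\<lambda>_. 1"]
  by (simp add: wf_policy_def det_policy_def)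

lemma occ_nonneg:
  assumes "wf_policy M \<pi>" "h \<in> {1..hor M}" "x \<in> layer M h"
  shows "0 \<le> occ M \<pi> h x"
  using assms(2,3)
proof (induction h arbitrary: x)
  case (Suc h)
  show ?case
  proof (cases "h = 0")
    case True
    then show ?thesis using Suc.prems init_nonneg by (simp add: occ_def)
  next
    case False
    have "0 \<le> occ M \<pi> h y * \<pi> y a * trans M y a x"
      if "y \<in> layer M h" "a \<in> acts M" for y a
      using Suc that False assms(1) trans_nonneg[of h y a x] layer_in_states[of h y]
      by (intro mult_nonneg_nonneg) (auto simp: wf_policy_def)
    then show ?thesis using False by (simp add: occ_Suc sum_nonneg)
  qed
qed simp

lemma occ_sum_eq_1:
  assumes "wf_policy M \<pi>" "h \<in> {1..hor M}"
  shows "(\<Sum>x\<in>layer M h. occ M \<pi> h x) = 1"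
  using assms(2)
proof (induction h)
  case (Suc h)
  show ?case
  proof (cases "h = 0")
    case True
    then show ?thesis using sum_init by (simp add: occ_def)
  next
    case False
    then have h: "h \<in> {1..<hor M}" using Suc.prems by auto
    have "(\<Sum>x'\<in>layer M (Suc h). occ M \<pi> (Suc h) x')
        = (\<Sum>x\<in>layer M h. \<Sum>a\<in>acts M. occ M \<pi> h x * \<pi> x a * (\<Sum>x'\<in>layer M (Suc h). trans M x a x'))"
      using False by (simp add: occ_Suc sum.swap[of _ "layer M (Suc h)"] sum_distrib_left)
    also have "\<dots> = (\<Sum>x\<in>layer M h. occ M \<pi> h x * (\<Sum>a\<in>acts M. \<pi> x a))"
      using sum_trans[OF h] by (simp add: sum_distrib_left)
    also have "\<dots> = (\<Sum>x\<in>layer M h. occ M \<pi> h x)"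
      using h assms(1) layer_in_states[of h] by (simp add: wf_policy_def)
    finally show ?thesis using Suc h by simp
  qed
qed simp

lemma conc_nonneg:
  assumes "\<And>x. x \<in> states M \<Longrightarrow> \<pi>e x \<in> acts M" "wf_policy M \<pi>b"
  shows "0 \<le> conc M (det_policy \<pi>e) \<pi>b"
proof -
  obtain x where x: "x \<in> layer M 1" "0 < init M x"
  proof (rule ccontr)
    assume "\<not> thesis"
    then have "(\<Sum>x\<in>layer M 1. init M x) \<le> 0" using that by (force intro: sum_nonpos)
    then show False using sum_init by simp
  qed
  have h1: "1 \<in> {1..hor M}" using hor_ge_1 by simp
  have e: "\<pi>e x \<in> acts M" using assms(1) layer_in_states[OF h1 x(1)] .
  have "0 \<le> ratio (occ_sa M (det_policy \<pi>e) 1 x (\<pi>e x)) (occ_sa M \<pi>b 1 x (\<pi>e x))"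
    using x occ_nonneg[OF assms(2) h1 x(1)] assms(2) layer_in_states[OF h1 x(1)] e
    by (intro ratio_nonneg) (auto simp: occ_sa_def occ_def det_policy_def wf_policy_def)
  also have "\<dots> \<le> conc M (det_policy \<pi>e) \<pi>b"
    using x h1 e by (intro ratio_le_conc) (auto simp: occ_sa_def occ_def det_policy_def)
  finally show ?thesis .
qed

end

locale replicator = layered_mdp M for M :: "('s,'a) mdp" +
  fixes \<pi>e :: "'s \<Rightarrow> 'a" and \<pi>b :: "('s,'a) policy" and \<pi>o :: "'s \<Rightarrow> 'a" and K :: nat
  assumes \<pi>e_acts: "x \<in> states M \<Longrightarrow> \<pi>e x \<in> acts M"
    and \<pi>b_wf: "wf_policy M \<pi>b"
    and \<pi>o_acts: "x \<in> states M \<Longrightarrow> \<pi>o x \<in> acts M"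
    and \<pi>o_ne_\<pi>e: "x \<in> states M \<Longrightarrow> \<pi>o x \<noteq> \<pi>e x"
    and K_ge_1: "1 \<le> K"
begin

lemma \<pi>e_wf: "wf_policy M (det_policy \<pi>e)"
  using \<pi>e_acts by (rule wf_policy_det)

abbreviation "Mt \<equiv> rep_mdp M \<pi>e \<pi>b K"
abbreviation "pe \<equiv> det_policy (rep_pe \<pi>e)"
abbreviation "pb \<equiv> rep_pb K \<pi>e \<pi>b \<pi>o"

text \<open>The \<open>k\<close>-th copy of layer \<open>h\<close> is layer \<open>rep_index h k\<close> of \<open>Mt\<close>; the last layer of \<open>M\<close>
  has a single copy.\<close>

definition rep_index :: "nat \<Rightarrow> nat \<Rightarrow> nat" where
  "rep_index h k = (h - 1) * K + k"

definition rep_cell :: "nat \<Rightarrow> nat \<Rightarrow> bool" where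
  "rep_cell h k \<longleftrightarrow> (h \<in> {1..<hor M} \<and> k \<in> {1..K}) \<or> (h = hor M \<and> k = 1)"

lemma rep_index_Suc: "rep_index h (Suc k) = Suc (rep_index h k)"
  by (simp add: rep_index_def)

lemma rep_index_block_end: "1 \<le> h \<Longrightarrow> rep_index (Suc h) 1 = Suc (rep_index h K)"
  by (cases h) (simp_all add: rep_index_def)

lemma hor_rep: "hor Mt = rep_index (hor M) 1"
  by (simp add: rep_mdp_def rep_index_def)

lemma rep_cell_layer: "rep_cell h k \<Longrightarrow> h \<in> {1..hor M}"
  using hor_ge_1 by (auto simp: rep_cell_def)

lemma rep_index_le_hor: "rep_cell h k \<Longrightarrow> rep_index h k \<le> hor Mt"
proof -
  assume "rep_cell h k"
  then consider "h \<in> {1..<hor M}" "k \<in> {1..K}" | "h = hor M" "k = 1"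
    by (auto simp: rep_cell_def)
  then show ?thesis
  proof cases
    case 1
    then have "rep_index h k \<le> h * K" by (cases h) (auto simp: rep_index_def)
    also have "\<dots> \<le> (hor M - 1) * K" using 1 by (intro mult_le_mono1) auto
    finally show ?thesis by (simp add: rep_mdp_def)
  qed (simp add: hor_rep)
qed

lemma acts_rep [simp]: "acts Mt = acts M"
  by (simp add: rep_mdp_def)

lemma layer_rep:
  assumes "rep_cell h k"
  shows "layer Mt (rep_index h k) = (\<lambda>x. (x, k)) ` layer M h"
proof (cases "h = hor M")
  case False
  with assms have hk: "h \<in> {1..<hor M}" "k \<in> {1..K}" by (auto simp: rep_cell_def)
  then have "rep_index h k < rep_index h K + 1" by (simp add: rep_index_def)
  also have "\<dots> \<le> hor Mt"
  proof -
    have "rep_cell (Suc h) 1" using hk by (auto simp: rep_cell_def)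
    then show ?thesis using rep_index_le_hor[of "Suc h" 1] rep_index_block_end[of h] hk by simp
  qed
  finally have le: "rep_index h k \<le> (hor M - 1) * K" by (simp add: rep_mdp_def)
  have "rep_index h k - 1 = (k - 1) + (h - 1) * K" using hk by (simp add: rep_index_def)
  moreover have "k - 1 < K" using hk by auto
  ultimately have "(rep_index h k - 1) div K = h - 1" "(rep_index h k - 1) mod K = k - 1"
    by simp_all
  with hk le show ?thesis by (simp add: rep_mdp_def rep_index_def)
qed (use assms in \<open>simp_all add: rep_mdp_def rep_index_def rep_cell_def\<close>)

lemma layer_rep_cases:
  assumes "l \<in> {1..hor Mt}" "s \<in> layer Mt l"
  obtains h k x where "rep_cell h k" "l = rep_index h k" "s = (x, k)" "x \<in> layer M h"
proof -
  have "\<exists>h k. rep_cell h k \<and> l = rep_index h k"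
  proof (cases "l \<le> (hor M - 1) * K")
    case True
    define h k where "h = (l - 1) div K + 1" and "k = (l - 1) mod K + 1"
    have "l - 1 < (hor M - 1) * K" using True assms(1) by (simp only: atLeastAtMost_iff) arith
    then have "(l - 1) div K < hor M - 1" using K_ge_1 by (simp add: div_less_iff_less_mult)
    moreover have "k \<in> {1..K}" using K_ge_1 by (simp add: k_def Suc_leI)
    ultimately have "rep_cell h k" by (auto simp: rep_cell_def h_def)
    moreover have "l = rep_index h k"
      using assms(1) div_mult_mod_eq[of "l - 1" K] by (simp add: h_def k_def rep_index_def)
    ultimately show ?thesis by blast
  next
    case False
    then have "l = rep_index (hor M) 1" using assms(1) by (simp add: rep_mdp_def rep_index_def)
    then show ?thesis by (auto simp: rep_cell_def)
  qed
  with assms(2) layer_rep that show thesis by blast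
qed

lemma init_rep: "init Mt (x, k) = (if k = 1 then init M x else 0)"
  by (simp add: rep_mdp_def)

lemma rew_rep_block_end: "rew Mt (x, K) a = rew M x a"
  and rew_rep_last: "x \<in> layer M (hor M) \<Longrightarrow> rew Mt (x, k) a = rew M x a"
  using layer_of_eq[of "hor M"] hor_ge_1 by (simp_all add: rep_mdp_def)

lemma rew_rep_within:
  "h \<in> {1..<hor M} \<Longrightarrow> x \<in> layer M h \<Longrightarrow> k < K \<Longrightarrow> rew Mt (x, k) a = 0"
  using layer_of_eq[of h x] by (simp add: rep_mdp_def)

lemma trans_rep_block_end: "trans Mt (x, K) a (x', 1) = trans M x a x'"
  by (simp add: rep_mdp_def)

lemma trans_rep_within:
  "h \<in> {1..hor M} \<Longrightarrow> x \<in> layer M h \<Longrightarrow> x' \<in> layer M h \<Longrightarrow> k < K \<Longrightarrow>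
   trans Mt (x, k) a (x', Suc k) =
     (if a = \<pi>e x then (if x' = x then 1 else 0) else occ M \<pi>b h x')"
  using layer_of_eq[of h x] by (simp add: rep_mdp_def)

lemma occ_rep_within:
  assumes "h \<in> {1..<hor M}" "k \<in> {1..<K}"
  shows "occ Mt \<pi>t (rep_index h (Suc k)) (x', Suc k) =
    (\<Sum>x\<in>layer M h. \<Sum>a\<in>acts M.
       occ Mt \<pi>t (rep_index h k) (x, k) * \<pi>t (x, k) a * trans Mt (x, k) a (x', Suc k))"
proof -
  have "rep_cell h k" "1 \<le> rep_index h k" using assms by (auto simp: rep_cell_def rep_index_def)
  then show ?thesis by (simp add: rep_index_Suc occ_Suc layer_rep sum_image_Pair_left)
qed

lemma occ_rep_block_start:
  assumes "h \<in> {1..<hor M}" "\<And>x a. x \<in> layer M h \<Longrightarrow> \<pi>t (x, K) a = \<pi> x a"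
    and "\<And>x. x \<in> layer M h \<Longrightarrow> occ Mt \<pi>t (rep_index h K) (x, K) = occ M \<pi> h x"
  shows "occ Mt \<pi>t (rep_index (Suc h) 1) (x', 1) = occ M \<pi> (Suc h) x'"
proof -
  have "rep_cell h K" "1 \<le> rep_index h K" using assms(1) K_ge_1 by (auto simp: rep_cell_def rep_index_def)
  moreover have "rep_index (Suc h) 1 = Suc (rep_index h K)"
    using assms(1) rep_index_block_end[of h] by simp
  moreover have "1 \<le> h" using assms(1) by simp
  ultimately show ?thesis using assms(2,3) occ_Suc[of h M \<pi> x']
    by (simp add: occ_Suc layer_rep sum_image_Pair_left trans_rep_block_end[simplified])
qed

lemma occ_rep_transfer:
  assumes block_end: "\<And>x a. x \<in> states M \<Longrightarrow> \<pi>t (x, K) a = \<pi> x a"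
    and within: "\<And>h k x'. h \<in> {1..<hor M} \<Longrightarrow> k \<in> {1..<K} \<Longrightarrow> x' \<in> layer M h \<Longrightarrow>
        (\<And>x. x \<in> layer M h \<Longrightarrow> occ Mt \<pi>t (rep_index h k) (x, k) = occ M \<pi> h x) \<Longrightarrow>
        occ Mt \<pi>t (rep_index h (Suc k)) (x', Suc k) = occ M \<pi> h x'"
    and "rep_cell h k" "x \<in> layer M h"
  shows "occ Mt \<pi>t (rep_index h k) (x, k) = occ M \<pi> h x"
proof -
  have row: "\<forall>x\<in>layer M h. occ Mt \<pi>t (rep_index h k) (x, k) = occ M \<pi> h x"
    if h: "h \<in> {1..<hor M}" and k: "1 \<le> k" "k \<le> K"
      and start: "\<forall>x\<in>layer M h. occ Mt \<pi>t (rep_index h 1) (x, 1) = occ M \<pi> h x" for h k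
    using k(1)
  proof (induction k rule: dec_induct)
    case (step n)
    then have "n \<in> {1..<K}" using k(2) by simp
    with within[OF h] step.IH show ?case by simp
  qed (fact start)
  have start: "\<forall>x\<in>layer M h. occ Mt \<pi>t (rep_index h 1) (x, 1) = occ M \<pi> h x"
    if h: "1 \<le> h" "h \<le> hor M" for h
    using h(1)
  proof (induction h rule: dec_induct)
    case base
    then show ?case by (simp add: rep_index_def occ_def init_rep)
  next
    case (step n)
    then have n: "n \<in> {1..<hor M}" using h(2) by simp
    have "\<pi>t (x, K) a = \<pi> x a" if "x \<in> layer M n" for x a
      using block_end layer_in_states[of n x] n that by auto
    moreover have "occ Mt \<pi>t (rep_index n K) (x, K) = occ M \<pi> n x" if "x \<in> layer M n" for x
      using row[OF n K_ge_1 order.refl step.IH] that by blast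
    ultimately show ?case by (intro ballI occ_rep_block_start[OF n])
  qed
  from \<open>rep_cell h k\<close> consider "h \<in> {1..<hor M}" "k \<in> {1..K}" | "h = hor M" "k = 1"
    by (auto simp: rep_cell_def)
  then show ?thesis
  proof cases
    case 1
    then show ?thesis using row start \<open>x \<in> layer M h\<close> by auto
  next
    case 2
    then show ?thesis using start hor_ge_1 \<open>x \<in> layer M h\<close> by auto
  qed
qed

lemma sum_rep_pb_within:
  assumes "x \<in> states M" "k \<noteq> K"
  shows "(\<Sum>a\<in>acts M. pb (x, k) a * g a) = (g (\<pi>e x) + g (\<pi>o x)) / 2"
proof -
  have "(\<Sum>a\<in>acts M. pb (x, k) a * g a)
      = (\<Sum>a\<in>acts M. (if \<pi>e x = a then g a / 2 else 0) + (if \<pi>o x = a then g a / 2 else 0))"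
    using assms by (intro sum.cong) (auto simp: rep_pb_def)
  then show ?thesis
    using assms finite_acts \<pi>e_acts \<pi>o_acts by (simp add: sum.distrib add_divide_distrib)
qed

lemma occ_rep_pe:
  "rep_cell h k \<Longrightarrow> x \<in> layer M h \<Longrightarrow> occ Mt pe (rep_index h k) (x, k) = occ M (det_policy \<pi>e) h x"
proof (rule occ_rep_transfer)
  fix h k x'
  assume h: "h \<in> {1..<hor M}" and k: "k \<in> {1..<K}" and x': "x' \<in> layer M h"
    and IH: "\<And>x. x \<in> layer M h \<Longrightarrow> occ Mt pe (rep_index h k) (x, k) = occ M (det_policy \<pi>e) h x"
  have "occ Mt pe (rep_index h (Suc k)) (x', Suc k)
      = (\<Sum>x\<in>layer M h. occ M (det_policy \<pi>e) h x * trans Mt (x, k) (\<pi>e x) (x', Suc k))"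
    using occ_rep_within[OF h k] IH layer_in_states[of h] h
    by (simp add: mult.assoc sum_distrib_left[symmetric] sum_det_policy finite_acts \<pi>e_acts)
  also have "\<dots> = (\<Sum>x\<in>layer M h. if x = x' then occ M (det_policy \<pi>e) h x else 0)"
    using h k x' trans_rep_within[of h] by (intro sum.cong) auto
  also have "\<dots> = occ M (det_policy \<pi>e) h x'"
    using h x' finite_layer[of h] by simp
  finally show "occ Mt pe (rep_index h (Suc k)) (x', Suc k) = occ M (det_policy \<pi>e) h x'" .
qed simp_all

lemma occ_rep_pb:
  "rep_cell h k \<Longrightarrow> x \<in> layer M h \<Longrightarrow> occ Mt pb (rep_index h k) (x, k) = occ M \<pi>b h x"
proof (rule occ_rep_transfer)
  fix h k x'
  assume h: "h \<in> {1..<hor M}" and k: "k \<in> {1..<K}" and x': "x' \<in> layer M h"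
    and IH: "\<And>x. x \<in> layer M h \<Longrightarrow> occ Mt pb (rep_index h k) (x, k) = occ M \<pi>b h x"
  let ?w = "occ M \<pi>b h"
  have "occ Mt pb (rep_index h (Suc k)) (x', Suc k)
      = (\<Sum>x\<in>layer M h. ?w x * (trans Mt (x, k) (\<pi>e x) (x', Suc k) + trans Mt (x, k) (\<pi>o x) (x', Suc k)) / 2)"
    using occ_rep_within[OF h k] IH layer_in_states[of h] h k
    by (simp add: mult.assoc sum_distrib_left[symmetric] sum_rep_pb_within)
  also have "\<dots> = (\<Sum>x\<in>layer M h. (if x = x' then ?w x else 0) / 2 + ?w x / 2 * ?w x')"
    using h k x' \<pi>o_ne_\<pi>e layer_in_states[of h] trans_rep_within[of h]
    by (intro sum.cong) (auto simp: field_simps)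
  also have "\<dots> = ?w x' / 2 + (\<Sum>x\<in>layer M h. ?w x) / 2 * ?w x'"
    using h x' finite_layer[of h]
    by (simp add: sum.distrib sum_divide_distrib[symmetric] sum_distrib_right)
  also have "\<dots> = ?w x'"
    using occ_sum_eq_1[OF \<pi>b_wf] h by simp
  finally show "occ Mt pb (rep_index h (Suc k)) (x', Suc k) = ?w x'" .
qed (simp_all add: rep_pb_def)

lemma Q_rep_last:
  "x \<in> layer M (hor M) \<Longrightarrow> Q Mt pe (hor Mt) (x, 1) a = Q M (det_policy \<pi>e) (hor M) x a"
  by (simp add: Q_hor rew_rep_last)

lemma Q_rep_block_end:
  assumes h: "h \<in> {1..<hor M}"
    and succ: "\<And>x'. x' \<in> layer M (Suc h) \<Longrightarrow>
      Q Mt pe (rep_index (Suc h) 1) (x', 1) (\<pi>e x') = Q M (det_policy \<pi>e) (Suc h) x' (\<pi>e x')"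
  shows "Q Mt pe (rep_index h K) (x, K) a = Q M (det_policy \<pi>e) h x a"
proof -
  have cell: "rep_cell (Suc h) 1" using h K_ge_1 by (auto simp: rep_cell_def)
  have idx: "Suc (rep_index h K) = rep_index (Suc h) 1"
    using h rep_index_block_end[of h] by simp
  have lt: "rep_index h K < hor Mt" using rep_index_le_hor[OF cell] idx by simp
  have states: "x' \<in> states M" if "x' \<in> layer M (Suc h)" for x'
    using that h layer_in_states[of "Suc h" x'] by simp
  have "Q Mt pe (rep_index h K) (x, K) a = rew M x a +
      (\<Sum>x'\<in>layer M (Suc h). trans M x a x' * Q Mt pe (rep_index (Suc h) 1) (x', 1) (\<pi>e x'))"
    unfolding Q_Suc[OF lt] idx layer_rep[OF cell] sum_image_Pair_left
    using states by (simp add: sum_det_policy finite_acts \<pi>e_acts rew_rep_block_end trans_rep_block_end[simplified])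
  also have "\<dots> = rew M x a +
      (\<Sum>x'\<in>layer M (Suc h). trans M x a x' * Q M (det_policy \<pi>e) (Suc h) x' (\<pi>e x'))"
    using succ by simp
  also have "\<dots> = Q M (det_policy \<pi>e) h x a"
    using h states by (simp add: Q_Suc[of h] sum_det_policy finite_acts \<pi>e_acts)
  finally show ?thesis .
qed

lemma Q_rep_within:
  assumes h: "h \<in> {1..<hor M}" and k: "k \<in> {1..<K}" and x: "x \<in> layer M h"
    and succ: "\<And>x'. x' \<in> layer M h \<Longrightarrow>
      Q Mt pe (rep_index h (Suc k)) (x', Suc k) (\<pi>e x') = Q M (det_policy \<pi>e) h x' (\<pi>e x')"
  shows "Q Mt pe (rep_index h k) (x, k) a =
    (if a = \<pi>e x then Q M (det_policy \<pi>e) h x (\<pi>e x)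
     else (\<Sum>x'\<in>layer M h. occ M \<pi>b h x' * Q M (det_policy \<pi>e) h x' (\<pi>e x')))"
proof -
  have cell: "rep_cell h (Suc k)" using h k by (auto simp: rep_cell_def)
  have lt: "rep_index h k < hor Mt" using rep_index_le_hor[OF cell] by (simp add: rep_index_Suc)
  have hH: "h \<in> {1..hor M}" using h by simp
  have "Q Mt pe (rep_index h k) (x, k) a =
      (\<Sum>x'\<in>layer M h. trans Mt (x, k) a (x', Suc k) * Q M (det_policy \<pi>e) h x' (\<pi>e x'))"
    unfolding Q_Suc[OF lt] rep_index_Suc[symmetric] layer_rep[OF cell] sum_image_Pair_left
    using h k x succ layer_in_states[OF hH] by (simp add: sum_det_policy finite_acts \<pi>e_acts rew_rep_within)
  also have "\<dots> = (if a = \<pi>e x then Q M (det_policy \<pi>e) h x (\<pi>e x)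
     else (\<Sum>x'\<in>layer M h. occ M \<pi>b h x' * Q M (det_policy \<pi>e) h x' (\<pi>e x')))"
  proof (cases "a = \<pi>e x")
    case True
    then have "(\<Sum>x'\<in>layer M h. trans Mt (x, k) a (x', Suc k) * Q M (det_policy \<pi>e) h x' (\<pi>e x'))
        = (\<Sum>x'\<in>layer M h. if x' = x then Q M (det_policy \<pi>e) h x' (\<pi>e x') else 0)"
      using k x trans_rep_within[OF hH] by (intro sum.cong) auto
    then show ?thesis using True x finite_layer[OF hH] by simp
  next
    case False
    then show ?thesis using k x trans_rep_within[OF hH] by (auto intro: sum.cong)
  qed
  finally show ?thesis .
qed

lemma Q_rep_on_policy:
  assumes "rep_cell h k" "x \<in> layer M h"
  shows "Q Mt pe (rep_index h k) (x, k) (\<pi>e x) = Q M (det_policy \<pi>e) h x (\<pi>e x)"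
proof -
  have row: "\<forall>x\<in>layer M h. Q Mt pe (rep_index h k) (x, k) (\<pi>e x) = Q M (det_policy \<pi>e) h x (\<pi>e x)"
    if h: "h \<in> {1..<hor M}" and k: "1 \<le> k" "k \<le> K"
      and succ: "\<forall>x\<in>layer M (Suc h).
        Q Mt pe (rep_index (Suc h) 1) (x, 1) (\<pi>e x) = Q M (det_policy \<pi>e) (Suc h) x (\<pi>e x)"
    for h k
    using k(2)
  proof (induction k rule: inc_induct)
    case base
    show ?case using Q_rep_block_end[OF h] succ by simp
  next
    case (step n)
    then have "n \<in> {1..<K}" using k(1) by simp
    then show ?case using Q_rep_within[OF h] step.IH by simp
  qed
  have start: "\<forall>x\<in>layer M h. Q Mt pe (rep_index h 1) (x, 1) (\<pi>e x) = Q M (det_policy \<pi>e) h x (\<pi>e x)"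
    if h: "1 \<le> h" "h \<le> hor M" for h
    using h(2)
  proof (induction h rule: inc_induct)
    case base
    show ?case using Q_rep_last by (simp add: hor_rep)
  next
    case (step n)
    then have "n \<in> {1..<hor M}" using h(1) by simp
    then show ?case using row[of n 1] step.IH K_ge_1 by simp
  qed
  from \<open>rep_cell h k\<close> consider "h \<in> {1..<hor M}" "k \<in> {1..K}" | "h = hor M" "k = 1"
    by (auto simp: rep_cell_def)
  then show ?thesis
  proof cases
    case 1
    then show ?thesis using row start \<open>x \<in> layer M h\<close> by auto
  next
    case 2
    then show ?thesis using start hor_ge_1 \<open>x \<in> layer M h\<close> by auto
  qed
qed

lemma Q_rep:
  assumes h: "h \<in> {1..<hor M}" and k: "k \<in> {1..K}" and x: "x \<in> layer M h"
  shows "Q Mt pe (rep_index h k) (x, k) a =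
    (if k = K then Q M (det_policy \<pi>e) h x a
     else if a = \<pi>e x then Q M (det_policy \<pi>e) h x (\<pi>e x)
     else (\<Sum>x'\<in>layer M h. occ M \<pi>b h x' * Q M (det_policy \<pi>e) h x' (\<pi>e x')))"
proof (cases "k = K")
  case True
  have "rep_cell (Suc h) 1" using h K_ge_1 by (auto simp: rep_cell_def)
  then show ?thesis using True Q_rep_block_end[OF h] Q_rep_on_policy by simp
next
  case False
  then have k': "k \<in> {1..<K}" using k by simp
  then have "rep_cell h (Suc k)" using h by (auto simp: rep_cell_def)
  then show ?thesis using False Q_rep_within[OF h k' x] Q_rep_on_policy by simp
qed

lemma Vval_rep: "Vval Mt pe = Vval M (det_policy \<pi>e)"
proof -
  have cell: "rep_cell 1 1" using hor_ge_1 K_ge_1 by (auto simp: rep_cell_def)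
  have idx: "rep_index 1 1 = 1" by (simp add: rep_index_def)
  have states: "x \<in> states M" if "x \<in> layer M 1" for x
    using that hor_ge_1 layer_in_states[of 1 x] by simp
  have "Vval Mt pe = (\<Sum>x\<in>layer M 1. init M x * Q Mt pe (rep_index 1 1) (x, 1) (\<pi>e x))"
    unfolding Vval_def layer_rep[OF cell, unfolded idx] sum_image_Pair_left idx
    using states by (simp add: init_rep sum_det_policy finite_acts \<pi>e_acts)
  also have "\<dots> = (\<Sum>x\<in>layer M 1. init M x * Q M (det_policy \<pi>e) 1 x (\<pi>e x))"
    using Q_rep_on_policy[OF cell] by simp
  also have "\<dots> = Vval M (det_policy \<pi>e)"
    unfolding Vval_def using states by (simp add: sum_det_policy finite_acts \<pi>e_acts)
  finally show ?thesis .
qed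

lemma conc_le_twice: "conc M (det_policy \<pi>e) \<pi>b \<le> 2 * conc M (det_policy \<pi>e) \<pi>b"
  using conc_nonneg[of \<pi>e \<pi>b, OF \<pi>e_acts \<pi>b_wf] by (cases "conc M (det_policy \<pi>e) \<pi>b") auto

lemma ratio_zero_le_twice_conc: "q \<noteq> 0 \<Longrightarrow> ratio 0 q \<le> 2 * conc M (det_policy \<pi>e) \<pi>b"
  using conc_nonneg[of \<pi>e \<pi>b, OF \<pi>e_acts \<pi>b_wf] conc_le_twice by (simp add: ratio_def zero_ereal_def)

lemma ratio_rep_le:
  assumes cell: "rep_cell h k" and x: "x \<in> layer M h" and a: "a \<in> acts M"
    and nz: "\<not> (occ_sa Mt pe (rep_index h k) (x, k) a = 0 \<and> occ_sa Mt pb (rep_index h k) (x, k) a = 0)"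
  shows "ratio (occ_sa Mt pe (rep_index h k) (x, k) a) (occ_sa Mt pb (rep_index h k) (x, k) a)
    \<le> 2 * conc M (det_policy \<pi>e) \<pi>b"
proof -
  define u w where "u = occ M (det_policy \<pi>e) h x" and "w = occ M \<pi>b h x"
  have hH: "h \<in> {1..hor M}" using rep_cell_layer[OF cell] .
  have xs: "x \<in> states M" using layer_in_states[OF hH x] .
  have e: "\<pi>e x \<in> acts M" using \<pi>e_acts[OF xs] .
  have pe: "occ_sa Mt pe (rep_index h k) (x, k) a = u * det_policy \<pi>e x a"
    using occ_rep_pe[OF cell x] by (simp add: occ_sa_def u_def)
  have pb: "occ_sa Mt pb (rep_index h k) (x, k) a = w * pb (x, k) a"
    using occ_rep_pb[OF cell x] by (simp add: occ_sa_def w_def)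
  consider (off) "a \<noteq> \<pi>e x" | (last) "a = \<pi>e x" "k = K" | (inner) "a = \<pi>e x" "k \<noteq> K"
    by blast
  then show ?thesis
  proof cases
    case off
    then have "occ_sa Mt pe (rep_index h k) (x, k) a = 0" using pe by (simp add: det_policy_def)
    then show ?thesis using nz ratio_zero_le_twice_conc by metis
  next
    case last
    have "occ_sa Mt pe (rep_index h k) (x, k) a = occ_sa M (det_policy \<pi>e) h x a"
      using pe by (simp add: occ_sa_def u_def)
    moreover have "occ_sa Mt pb (rep_index h k) (x, k) a = occ_sa M \<pi>b h x a"
      using pb last by (simp add: occ_sa_def w_def rep_pb_def)
    ultimately show ?thesis
      using ratio_le_conc[OF hH x a] nz conc_le_twice by (metis order.trans)
  next
    case inner
    then have "pb (x, k) a = 1 / 2" using \<pi>o_ne_\<pi>e[OF xs] by (simp add: rep_pb_def)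
    then have pb_half: "occ_sa Mt pb (rep_index h k) (x, k) a = w / 2" using pb by simp
    have pe_u: "occ_sa Mt pe (rep_index h k) (x, k) a = u" using pe inner by (simp add: det_policy_def)
    show ?thesis
    proof (cases "u = 0")
      case True
      then show ?thesis using nz ratio_zero_le_twice_conc pe_u by metis
    next
      case False
      then have "0 < u" using occ_nonneg[OF \<pi>e_wf hH x] by (simp add: u_def)
      have w0: "0 \<le> w" using occ_nonneg[OF \<pi>b_wf hH x] by (simp add: w_def)
      have "ratio u (w / 2) \<le> 2 * ratio u (w * \<pi>b x (\<pi>e x))"
        using \<pi>b_wf xs e member_le_sum[of "\<pi>e x" "acts M" "\<pi>b x"] finite_acts
        by (intro ratio_half_le[OF \<open>0 < u\<close> w0]) (auto simp: wf_policy_def)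
      also have "\<dots> \<le> 2 * conc M (det_policy \<pi>e) \<pi>b"
        using ratio_le_conc[OF hH x e, of "det_policy \<pi>e" \<pi>b] False
        by (intro ereal_mult_left_mono) (auto simp: occ_sa_def u_def w_def det_policy_def)
      finally show ?thesis unfolding pe_u pb_half .
    qed
  qed
qed

lemma conc_rep_le: "conc Mt pe pb \<le> 2 * conc M (det_policy \<pi>e) \<pi>b"
  unfolding conc_def[of Mt]
proof (rule SUP_least, clarify)
  fix l s a
  assume l: "l \<in> {1..hor Mt}" and s: "s \<in> layer Mt l" and a: "a \<in> acts Mt"
    and nz: "\<not> (occ_sa Mt pe l s a = 0 \<and> occ_sa Mt pb l s a = 0)"
  obtain h k x where "rep_cell h k" "l = rep_index h k" "s = (x, k)" "x \<in> layer M h"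
    by (rule layer_rep_cases[OF l s])
  with a nz show "ratio (occ_sa Mt pe l s a) (occ_sa Mt pb l s a) \<le> 2 * conc M (det_policy \<pi>e) \<pi>b"
    using ratio_rep_le by simp
qed

end

theorem mainTheorem13:
  fixes M :: "('s,'a) mdp" and \<pi>e :: "'s \<Rightarrow> 'a" and \<pi>b :: "('s,'a) policy"
    and \<pi>o :: "'s \<Rightarrow> 'a" and K :: nat
  assumes "wf_mdp M" and "card (acts M) \<ge> 2"
    and "\<forall>x\<in>states M. \<pi>e x \<in> acts M"
    and "wf_policy M \<pi>b"
    and "\<forall>x\<in>states M. \<pi>o x \<in> acts M \<and> \<pi>o x \<noteq> \<pi>e x"
    and "K \<ge> 1"
  defines "Mt \<equiv> rep_mdp M \<pi>e \<pi>b K"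
    and "pe \<equiv> det_policy (rep_pe \<pi>e)"
    and "pb \<equiv> rep_pb K \<pi>e \<pi>b \<pi>o"
  shows "conc Mt pe pb \<le> 2 * conc M (det_policy \<pi>e) \<pi>b
    \<and> (\<forall>h\<in>{1..<hor M}. \<forall>x\<in>layer M h. \<forall>k\<in>{1..K}. \<forall>a\<in>acts M.
          Q Mt pe ((h - 1) * K + k) (x, k) a =
            (if k = K then Q M (det_policy \<pi>e) h x a
             else if a = \<pi>e x then Q M (det_policy \<pi>e) h x (\<pi>e x)
             else (\<Sum>x'\<in>layer M h. occ M \<pi>b h x' * Q M (det_policy \<pi>e) h x' (\<pi>e x'))))
    \<and> (\<forall>x\<in>layer M (hor M). \<forall>a\<in>acts M.
          Q Mt pe (hor Mt) (x, 1) a = Q M (det_policy \<pi>e) (hor M) x a)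
    \<and> Vval Mt pe = Vval M (det_policy \<pi>e)"
proof -
  interpret replicator M \<pi>e \<pi>b \<pi>o K
    using assms by unfold_locales auto
  show ?thesis
    unfolding Mt_def pe_def pb_def
    using conc_rep_le Q_rep Q_rep_last Vval_rep by (simp add: rep_index_def)
qed

end
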